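(* The wall $W$ has a $2$-queue layout (with respect to a linear order of $V(W)$) such that for all edges $pq$ and $pr$ with $p\prec q\prec r$ or $r\prec q\prec p$, the edges $pq$ and $pr$ are in distinct queues.
   Context: The wall is the infinite graph $W$ with vertex set $\mathbb{Z}^2$ and edge set $\{(x,y)(x+1,y): x,y\in\mathbb{Z}\}\cup\{(x,y)(x,y+1): x,y\in\mathbb{Z},\ x+y\text{ even}\}$. A $k$-queue layout of a graph consists of a linear order $\preceq$ of its vertex set and a partition of its edge set into $k$ parts (queues) such that no two edges in the same queue nest, i.e. there are no edges $ab$ and $cd$ in the same queue with $a\prec c\prec d\prec b$. *)

theory Defs
  imports Main
begin

type_synonym vtx = "int \<times> int"

definition wall_edges :: "vtx set set" where
  "wall_edges = {{(x, y), (x + 1, y)} | x y. True}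
              \<union> {{(x, y), (x, y + 1)} | x y. even (x + y)}"

definition prec :: "('a \<times> 'a) set \<Rightarrow> 'a \<Rightarrow> 'a \<Rightarrow> bool" where
  "prec R a b \<longleftrightarrow> (a, b) \<in> R \<and> a \<noteq> b"

text \<open>A k-queue layout of the graph with edge set E (vertex set UNIV):
  a linear order R of all vertices and an assignment Q of each edge to one of k queues
  (queues 0..k-1) such that no two edges in the same queue nest.\<close>
definition queue_layout :: "('a \<times> 'a) set \<Rightarrow> nat \<Rightarrow> ('a set \<Rightarrow> nat) \<Rightarrow> 'a set set \<Rightarrow> bool" where
  "queue_layout R k Q E \<longleftrightarrow>
     linear_order R \<and>
     (\<forall>e\<in>E. Q e < k) \<and>
     (\<forall>a b c d. {a, b} \<in> E \<and> {c, d} \<in> E \<and> Q {a, b} = Q {c, d} \<longrightarrow>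
        \<not> (prec R a c \<and> prec R c d \<and> prec R d b))"

end

theory Submission
  imports Defs
begin

text \<open>Order the vertices row by row. A horizontal edge then joins two consecutive vertices,
  so nothing lies strictly between its ends and it nests with no edge; two vertical edges
  span from one row to the next in the same column, so neither can lie strictly inside the
  other. Hence horizontal edges form one queue and vertical edges the other. Finally the two
  neighbours of a vertex along a common direction lie on opposite sides of it.\<close>

definition grid_adjacent :: "vtx \<Rightarrow> vtx \<Rightarrow> bool" where
  "grid_adjacent a b \<longleftrightarrow>
     (snd a = snd b \<and> (fst b = fst a + 1 \<or> fst a = fst b + 1)) \<or>
     (fst a = fst b \<and> (snd b = snd a + 1 \<or> snd a = snd b + 1))"

definition row_major :: "(vtx \<times> vtx) set" where
  "row_major = {(a, b). snd a < snd b \<or> (snd a = snd b \<and> fst a \<le> fst b)}"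

definition row_queue :: "vtx set \<Rightarrow> nat" where
  "row_queue e = (if \<exists>a\<in>e. \<exists>b\<in>e. snd a \<noteq> snd b then 1 else 0)"

lemma wall_edge_grid_adjacent:
  assumes "{a, b} \<in> wall_edges"
  shows "grid_adjacent a b"
proof -
  obtain x y where "{a, b} = {(x, y), (x + 1, y)} \<or> {a, b} = {(x, y), (x, y + 1)}"
    using assms unfolding wall_edges_def by blast
  then show ?thesis
    unfolding doubleton_eq_iff grid_adjacent_def by auto
qed

lemma linear_order_row_major: "linear_order row_major"
  unfolding linear_order_on_def partial_order_on_def preorder_on_def refl_on_def trans_def
    antisym_def total_on_def row_major_def by (auto simp: prod_eq_iff)

lemma prec_row_major_iff:
  "prec row_major a b \<longleftrightarrow> a \<noteq> b \<and> (snd a < snd b \<or> (snd a = snd b \<and> fst a \<le> fst b))"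
  unfolding prec_def row_major_def by auto

lemma row_queue_doubleton: "row_queue {a, b} = (if snd a = snd b then 0 else 1)"
  unfolding row_queue_def by auto

lemma row_major_no_nesting:
  assumes "grid_adjacent a b" "grid_adjacent c d" "row_queue {a, b} = row_queue {c, d}"
  shows "\<not> (prec row_major a c \<and> prec row_major c d \<and> prec row_major d b)"
proof -
  obtain a1 a2 b1 b2 c1 c2 d1 d2 where "a = (a1, a2)" "b = (b1, b2)" "c = (c1, c2)" "d = (d1, d2)"
    by (cases a, cases b, cases c, cases d) auto
  with assms show ?thesis
    unfolding grid_adjacent_def prec_row_major_iff row_queue_doubleton
    by (auto split: if_splits)
qed

lemma row_major_queue_layout:
  assumes "\<And>a b. {a, b} \<in> E \<Longrightarrow> grid_adjacent a b"
  shows "queue_layout row_major 2 row_queue E"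
  unfolding queue_layout_def
proof (intro conjI allI impI)
  show "linear_order row_major"
    by (rule linear_order_row_major)
  show "\<forall>e\<in>E. row_queue e < 2"
    by (simp add: row_queue_def)
  fix a b c d
  assume "{a, b} \<in> E \<and> {c, d} \<in> E \<and> row_queue {a, b} = row_queue {c, d}"
  then show "\<not> (prec row_major a c \<and> prec row_major c d \<and> prec row_major d b)"
    using row_major_no_nesting assms by blast
qed

lemma row_queue_neighbours_opposite:
  assumes "grid_adjacent p q" "grid_adjacent p r" "row_queue {p, q} = row_queue {p, r}"
  shows "\<not> (prec row_major p q \<and> prec row_major q r)"
    and "\<not> (prec row_major r q \<and> prec row_major q p)"
proof -
  obtain p1 p2 q1 q2 r1 r2 where "p = (p1, p2)" "q = (q1, q2)" "r = (r1, r2)"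
    by (cases p, cases q, cases r) auto
  with assms show "\<not> (prec row_major p q \<and> prec row_major q r)"
    and "\<not> (prec row_major r q \<and> prec row_major q p)"
    unfolding grid_adjacent_def prec_row_major_iff row_queue_doubleton
    by (auto split: if_splits)
qed

theorem lemma12:
  shows "\<exists>(R :: (vtx \<times> vtx) set) (Q :: vtx set \<Rightarrow> nat).
           queue_layout R 2 Q wall_edges \<and>
           (\<forall>p q r. {p, q} \<in> wall_edges \<and> {p, r} \<in> wall_edges \<and>
              ((prec R p q \<and> prec R q r) \<or> (prec R r q \<and> prec R q p)) \<longrightarrow>
              Q {p, q} \<noteq> Q {p, r})"
proof (intro exI conjI allI impI)
  show "queue_layout row_major 2 row_queue wall_edges"
    by (rule row_major_queue_layout) (rule wall_edge_grid_adjacent)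
next
  fix p q r
  assume "{p, q} \<in> wall_edges \<and> {p, r} \<in> wall_edges \<and>
    ((prec row_major p q \<and> prec row_major q r) \<or> (prec row_major r q \<and> prec row_major q p))"
  then show "row_queue {p, q} \<noteq> row_queue {p, r}"
    using row_queue_neighbours_opposite wall_edge_grid_adjacent by blast
qed

end
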